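(* For integers $j\ge 1$ let $$I_j=\left[\binom{j+1}{2}^{-1},\binom{j}{2}^{-1}\right)$$ (with the convention $\binom{1}{2}^{-1}=\infty$), and for $\rho>0$ let $\alpha_j(\rho)=1/j+\rho(j-1)/2$ and $\beta_j(\rho)=1/j+\rho(j+1)/2$. Assume $\rho\in I_{j+1}$ for some $j\ge 1$, and let $\rho'=\rho/[1-\alpha_{j+1}(\rho)]$. Then (1) $\rho<\alpha_{j+1}(\rho)$; (2) $\rho'\in I_j$; (3) $\beta_j(\rho')=[1/\alpha_{j+1}(\rho)-1]^{-1}$; (4) $\alpha_{j+1}(\rho)+\rho=\beta_{j+1}(\rho)$. *)

theory Defs
  imports Complex_Main
begin

definition in_I :: "nat \<Rightarrow> real \<Rightarrow> bool" where
  "in_I j \<rho> \<longleftrightarrow> 1 / real ((j+1) choose 2) \<le> \<rho> \<and>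
                   (j = 1 \<or> \<rho> < 1 / real (j choose 2))"

definition alpha :: "nat \<Rightarrow> real \<Rightarrow> real" where
  "alpha j \<rho> = 1 / real j + \<rho> * (real j - 1) / 2"

definition beta :: "nat \<Rightarrow> real \<Rightarrow> real" where
  "beta j \<rho> = 1 / real j + \<rho> * (real j + 1) / 2"

end

theory Submission
  imports Defs
begin

text \<open>In terms of the reciprocal \<open>x = 1/\<rho>\<close>, membership \<open>\<rho> \<in> I\<^sub>j\<close> reads
  \<open>C(j,2) < x \<le> C(j+1,2)\<close>, and \<open>1/\<rho>' = (1 - \<alpha>\<^sub>j\<^sub>+\<^sub>1(\<rho>))/\<rho> = j x/(j+1) - j/2\<close>.
  This increasing affine map sends \<open>C(j+1,2)\<close> to \<open>C(j,2)\<close> and \<open>C(j+2,2)\<close> to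
  \<open>C(j+1,2)\<close>, hence carries \<open>I\<^sub>j\<^sub>+\<^sub>1\<close> onto \<open>I\<^sub>j\<close>.\<close>

lemma real_choose_two: "real (m choose 2) = real m * (real m - 1) / 2"
  by (induction m) (simp_all add: numeral_2_eq_2 field_simps)

lemma in_I_iff_inverse:
  assumes "0 < j" and "0 < \<rho>"
  shows "in_I j \<rho> \<longleftrightarrow> real (j choose 2) < 1 / \<rho> \<and> 1 / \<rho> \<le> real (Suc j choose 2)"
proof -
  have lower: "1 / real (Suc j choose 2) \<le> \<rho> \<longleftrightarrow> 1 / \<rho> \<le> real (Suc j choose 2)"
    using assms by (simp add: field_simps)
  have upper: "(j = 1 \<or> \<rho> < 1 / real (j choose 2)) \<longleftrightarrow> real (j choose 2) < 1 / \<rho>"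
  proof (cases "j \<le> 1")
    case True
    then have "j = 1" using assms(1) by simp
    then show ?thesis using assms(2) by (simp add: binomial_eq_0)
  next
    case False
    then have "0 < real (j choose 2)" by simp
    then show ?thesis using False assms by (auto simp: field_simps)
  qed
  show ?thesis
    unfolding in_I_def Suc_eq_plus1[symmetric] using lower upper by blast
qed

lemma one_minus_alpha_div_eq:
  assumes "\<rho> \<noteq> 0"
  shows "(1 - alpha (Suc j) \<rho>) / \<rho> = real j / (real j + 1) * (1 / \<rho>) - real j / 2"
proof -
  have "1 - alpha (Suc j) \<rho> = real j / (real j + 1) - \<rho> * real j / 2"
    by (simp add: alpha_def field_simps)
  then show ?thesis
    using assms by (simp add: diff_divide_distrib)
qed

lemma one_minus_alpha_div_bounds:
  assumes "0 < j" and "0 < \<rho>" and "in_I (Suc j) \<rho>"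
  shows "real (j choose 2) < (1 - alpha (Suc j) \<rho>) / \<rho>"
    and "(1 - alpha (Suc j) \<rho>) / \<rho> \<le> real (Suc j choose 2)"
proof -
  define n where "n = real j"
  define x where "x = 1 / \<rho>"
  have n: "0 < n" using assms(1) by (simp add: n_def)
  have "n * (n + 1) / 2 < x" and "x \<le> (n + 1) * (n + 2) / 2"
    using assms by (auto simp: in_I_iff_inverse real_choose_two n_def x_def algebra_simps)
  then have "0 < n / (n + 1) * (x - n * (n + 1) / 2)"
    and "0 \<le> n / (n + 1) * ((n + 1) * (n + 2) / 2 - x)"
    using n by simp_all
  moreover have "n / (n + 1) * x - n / 2 = n * (n - 1) / 2 + n / (n + 1) * (x - n * (n + 1) / 2)"
    and "n / (n + 1) * x - n / 2 = n * (n + 1) / 2 - n / (n + 1) * ((n + 1) * (n + 2) / 2 - x)"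
    using n by (simp_all add: field_simps)
  ultimately have "n * (n - 1) / 2 < n / (n + 1) * x - n / 2"
    and "n / (n + 1) * x - n / 2 \<le> n * (n + 1) / 2"
    by linarith+
  then show "real (j choose 2) < (1 - alpha (Suc j) \<rho>) / \<rho>"
    and "(1 - alpha (Suc j) \<rho>) / \<rho> \<le> real (Suc j choose 2)"
    using assms(2)
    by (simp_all add: one_minus_alpha_div_eq real_choose_two n_def x_def algebra_simps)
qed

lemma one_minus_alpha_pos:
  assumes "0 < j" and "0 < \<rho>" and "in_I (Suc j) \<rho>"
  shows "0 < 1 - alpha (Suc j) \<rho>"
proof -
  have "0 < (1 - alpha (Suc j) \<rho>) / \<rho>"
    using one_minus_alpha_div_bounds(1)[OF assms] by (rule le_less_trans[OF of_nat_0_le_iff])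
  then show ?thesis
    using assms(2) by (simp add: zero_less_divide_iff)
qed

lemma in_I_rescale:
  assumes "0 < j" and "0 < \<rho>" and "in_I (Suc j) \<rho>"
  shows "in_I j (\<rho> / (1 - alpha (Suc j) \<rho>))"
proof -
  have "0 < \<rho> / (1 - alpha (Suc j) \<rho>)"
    using assms one_minus_alpha_pos by simp
  then show ?thesis
    using one_minus_alpha_div_bounds[OF assms] assms(1) by (simp add: in_I_iff_inverse)
qed

lemma less_alpha:
  assumes "2 \<le> k" and "0 < \<rho>" and "in_I k \<rho>"
  shows "\<rho> < alpha k \<rho>"
proof (cases "k = 2")
  case True
  then have "\<rho> < 1"
    using assms(3) by (simp add: in_I_def)
  then show ?thesis
    using True by (simp add: alpha_def)
next
  case False
  then have "\<rho> \<le> \<rho> * (real k - 1) / 2"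
    using assms(1,2) by (simp add: field_simps)
  moreover have "0 < 1 / real k"
    using assms(1) by simp
  ultimately show ?thesis
    unfolding alpha_def by linarith
qed

lemma beta_rescale:
  assumes "0 < j" and "alpha (Suc j) \<rho> \<noteq> 1"
  shows "beta j (\<rho> / (1 - alpha (Suc j) \<rho>)) = alpha (Suc j) \<rho> / (1 - alpha (Suc j) \<rho>)"
proof -
  define A where "A = 1 - alpha (Suc j) \<rho>"
  have A: "A \<noteq> 0"
    using assms(2) by (simp add: A_def)
  have key: "real j * alpha (Suc j) \<rho> = A + real j * \<rho> * (real j + 1) / 2"
    by (simp add: A_def alpha_def field_simps)
  have "beta j (\<rho> / A) = 1 / real j + \<rho> / A * (real j + 1) / 2"
    by (simp add: beta_def)
  also have "\<dots> = (A + real j * \<rho> * (real j + 1) / 2) / (real j * A)"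
    using assms(1) A by (simp add: field_simps)
  also have "\<dots> = alpha (Suc j) \<rho> / A"
    using assms(1) A by (simp flip: key)
  finally show ?thesis
    by (simp add: A_def)
qed

lemma inverse_inverse_minus_one:
  fixes a :: real
  assumes "a \<noteq> 0"
  shows "inverse (1 / a - 1) = a / (1 - a)"
  using assms by (cases "a = 1") (simp_all add: field_simps)

lemma alpha_add_self: "alpha k \<rho> + \<rho> = beta k \<rho>"
  by (simp add: alpha_def beta_def field_simps)

theorem lemma2:
  fixes j :: nat and \<rho> :: real
  assumes "j \<ge> 1" and "\<rho> > 0" and "in_I (j+1) \<rho>"
  defines "\<rho>' \<equiv> \<rho> / (1 - alpha (j+1) \<rho>)"
  shows "\<rho> < alpha (j+1) \<rho> \<and> in_I j \<rho>' \<and>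
         beta j \<rho>' = inverse (1 / alpha (j+1) \<rho> - 1) \<and>
         alpha (j+1) \<rho> + \<rho> = beta (j+1) \<rho>"
proof -
  have j: "0 < j" and I: "in_I (Suc j) \<rho>"
    using assms(1,3) by simp_all
  have less: "\<rho> < alpha (Suc j) \<rho>"
    using less_alpha assms(1,2) I by simp
  have "alpha (Suc j) \<rho> \<noteq> 1"
    using one_minus_alpha_pos[OF j assms(2) I] by simp
  then have "beta j \<rho>' = inverse (1 / alpha (Suc j) \<rho> - 1)"
    using less assms(2)
    by (simp add: \<rho>'_def beta_rescale[OF j] inverse_inverse_minus_one)
  then show ?thesis
    using less in_I_rescale[OF j assms(2) I] alpha_add_self by (simp add: \<rho>'_def)
qed

end
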